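(* For every integer $n \geq 6$, $$\gamma_{b,2}(C_6 \square C_n) = n + \begin{cases} 0 & \text{if } n \equiv 0 \pmod 4,\\ 1 & \text{if } n \equiv 1, 2, \text{ or } 3 \pmod 4.\end{cases}$$
   Context: For a graph $G$, a $2$-limited broadcast is a function $f: V(G) \to \{0,1,2\}$. A vertex $u$ hears the broadcast from $v$ if $f(v) > 0$ and $d(u,v) \leq f(v)$, where $d$ is the distance in $G$. The broadcast $f$ is dominating if every vertex of $G$ hears the broadcast from some vertex. The cost of $f$ is $\sum_{v \in V(G)} f(v)$. The $2$-limited broadcast domination number $\gamma_{b,2}(G)$ is the minimum cost of a $2$-limited dominating broadcast on $G$. $C_n$ denotes the cycle on $n$ vertices and $\square$ the Cartesian product of graphs. *)

theory Defs
  imports Main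
begin

inductive walk :: "'a set \<Rightarrow> ('a \<Rightarrow> 'a \<Rightarrow> bool) \<Rightarrow> 'a \<Rightarrow> 'a \<Rightarrow> nat \<Rightarrow> bool"
  for V E where
  walk_refl: "u \<in> V \<Longrightarrow> walk V E u u 0"
| walk_step: "u \<in> V \<Longrightarrow> E u w \<Longrightarrow> walk V E w v k \<Longrightarrow> walk V E u v (Suc k)"

(* graph distance: length of a shortest walk (only used for connected graphs) *)
definition gdist :: "'a set \<Rightarrow> ('a \<Rightarrow> 'a \<Rightarrow> bool) \<Rightarrow> 'a \<Rightarrow> 'a \<Rightarrow> nat" where
  "gdist V E u v = (LEAST k. walk V E u v k)"

definition cycle_adj :: "nat \<Rightarrow> nat \<Rightarrow> nat \<Rightarrow> bool" where
  "cycle_adj n i j \<longleftrightarrow> i < n \<and> j < n \<and> (j = (i + 1) mod n \<or> i = (j + 1) mod n) \<and> i \<noteq> j"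

definition cart_adj :: "('a \<Rightarrow> 'a \<Rightarrow> bool) \<Rightarrow> ('b \<Rightarrow> 'b \<Rightarrow> bool) \<Rightarrow> ('a \<times> 'b) \<Rightarrow> ('a \<times> 'b) \<Rightarrow> bool" where
  "cart_adj E1 E2 x y \<longleftrightarrow> (fst x = fst y \<and> E2 (snd x) (snd y)) \<or> (snd x = snd y \<and> E1 (fst x) (fst y))"

definition dom_broadcast2 :: "'a set \<Rightarrow> ('a \<Rightarrow> 'a \<Rightarrow> bool) \<Rightarrow> ('a \<Rightarrow> nat) \<Rightarrow> bool" where
  "dom_broadcast2 V E f \<longleftrightarrow> (\<forall>v\<in>V. f v \<le> 2) \<and>
     (\<forall>u\<in>V. \<exists>v\<in>V. f v > 0 \<and> gdist V E u v \<le> f v)"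

definition bcost :: "'a set \<Rightarrow> ('a \<Rightarrow> nat) \<Rightarrow> nat" where
  "bcost V f = (\<Sum>v\<in>V. f v)"

definition gamma_b2 :: "'a set \<Rightarrow> ('a \<Rightarrow> 'a \<Rightarrow> bool) \<Rightarrow> nat" where
  "gamma_b2 V E = (LEAST c. \<exists>f. dom_broadcast2 V E f \<and> bcost V f = c)"

definition torus_V :: "nat \<Rightarrow> nat \<Rightarrow> (nat \<times> nat) set" where
  "torus_V m n = {0..<m} \<times> {0..<n}"

definition torus_E :: "nat \<Rightarrow> nat \<Rightarrow> (nat \<times> nat) \<Rightarrow> (nat \<times> nat) \<Rightarrow> bool" where
  "torus_E m n = cart_adj (cycle_adj m) (cycle_adj n)"

end

theory Submission
  imports Defs
begin

(* Lower bound: a broadcast of strength s reaches at most 2 (s - d) + 1 vertices of a column at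
   cyclic distance d from its own column.  As every column has 6 vertices, the column loads x j
   (total strength placed in column j) satisfy
     6 <= 3 x j + (3 x (j - 1)) div 2 + (3 x (j + 1)) div 2 + x (j - 2) div 2 + x (j + 2) div 2.
   A potential built from a 6 x 6 transfer table shows that every cyclic sequence with this
   property has sum at least n, with equality only if the loads alternate 2, 0, 2, 0, ...
   Then every loaded column is a single 2-broadcast, and the empty column between two of them is
   covered only if their rows differ by 3; going once around the torus this forces 4 dvd n.
   Upper bound: 2-broadcasts in the even columns, alternately in rows 0 and 3, plus a
   1-broadcast when n mod 4 = 2. *)

section \<open>Walks and graph distance\<close>

lemma walk_vertices: "walk V E u v k \<Longrightarrow> u \<in> V \<and> v \<in> V"
  by (induction rule: walk.induct) auto

lemma walk_append: "walk V E u w k \<Longrightarrow> walk V E w v l \<Longrightarrow> walk V E u v (k + l)"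
  by (induction rule: walk.induct) (auto intro: walk.intros)

lemma walk_edge: "u \<in> V \<Longrightarrow> v \<in> V \<Longrightarrow> E u v \<Longrightarrow> walk V E u v 1"
  using walk_step[OF _ _ walk_refl] by fastforce

lemma walk_rev:
  assumes sym: "\<And>x y. E x y \<Longrightarrow> E y x" and "walk V E u v k"
  shows "walk V E v u k"
  using assms(2)
proof (induction rule: walk.induct)
  case (walk_refl u)
  then show ?case by (rule walk.walk_refl)
next
  case (walk_step u w v k)
  then have wu: "walk V E w u 1" using walk_edge sym walk_vertices by metis
  show ?case using walk_append[OF walk_step.IH wu] by simp
qed

lemma gdist_le: "walk V E u v k \<Longrightarrow> gdist V E u v \<le> k"
  unfolding gdist_def by (rule Least_le)

lemma walk_gdist: "walk V E u v k \<Longrightarrow> walk V E u v (gdist V E u v)"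
  unfolding gdist_def by (rule LeastI)

lemma gdist_eqI: "walk V E u v k \<Longrightarrow> (\<And>l. walk V E u v l \<Longrightarrow> k \<le> l) \<Longrightarrow> gdist V E u v = k"
  unfolding gdist_def by (rule Least_equality)

lemma gdist_edge_le:
  assumes "u \<in> V" "E u w" "walk V E w v k"
  shows "gdist V E u v \<le> Suc (gdist V E w v)"
  using walk_step[OF assms(1,2) walk_gdist[OF assms(3)]] by (rule gdist_le)

definition walk_connected :: "'a set \<Rightarrow> ('a \<Rightarrow> 'a \<Rightarrow> bool) \<Rightarrow> bool" where
  "walk_connected V E \<longleftrightarrow> (\<forall>u\<in>V. \<forall>v\<in>V. \<exists>k. walk V E u v k)"

lemma walk_cart_fst:
  "walk V1 E1 x y k \<Longrightarrow> z \<in> V2 \<Longrightarrow> walk (V1 \<times> V2) (cart_adj E1 E2) (x, z) (y, z) k"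
proof (induction rule: walk.induct)
  case (walk_step u w v k)
  then show ?case by (intro walk.walk_step) (auto simp: cart_adj_def)
qed (simp add: walk.walk_refl)

lemma walk_cart_snd:
  "walk V2 E2 x y k \<Longrightarrow> z \<in> V1 \<Longrightarrow> walk (V1 \<times> V2) (cart_adj E1 E2) (z, x) (z, y) k"
proof (induction rule: walk.induct)
  case (walk_step u w v k)
  then show ?case by (intro walk.walk_step) (auto simp: cart_adj_def)
qed (simp add: walk.walk_refl)

lemma gdist_cart_sum_le_walk:
  assumes conn1: "walk_connected V1 E1" and conn2: "walk_connected V2 E2"
  shows "walk (V1 \<times> V2) (cart_adj E1 E2) u v k \<Longrightarrow>
    gdist V1 E1 (fst u) (fst v) + gdist V2 E2 (snd u) (snd v) \<le> k"
proof (induction rule: walk.induct)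
  case (walk_refl u)
  then show ?case
    using gdist_le[OF walk.walk_refl, of "fst u" V1 E1] gdist_le[OF walk.walk_refl, of "snd u" V2 E2]
    by (auto simp: mem_Times_iff)
next
  case (walk_step u w v k)
  have w: "fst w \<in> V1" "snd w \<in> V2" and v: "fst v \<in> V1" "snd v \<in> V2"
    using walk_vertices[OF walk_step.hyps(3)] by (auto simp: mem_Times_iff)
  obtain k1 k2 where k1: "walk V1 E1 (fst w) (fst v) k1" and k2: "walk V2 E2 (snd w) (snd v) k2"
    using conn1 conn2 w v unfolding walk_connected_def by blast
  from walk_step.hyps(2) consider
      "fst u = fst w" "E2 (snd u) (snd w)" | "snd u = snd w" "E1 (fst u) (fst w)"
    unfolding cart_adj_def by blast
  then show ?case
  proof cases
    case 1
    then have "gdist V2 E2 (snd u) (snd v) \<le> Suc (gdist V2 E2 (snd w) (snd v))"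
      using gdist_edge_le[OF _ _ k2] walk_step.hyps(1) by (auto simp: mem_Times_iff)
    then show ?thesis using 1 walk_step.IH by simp
  next
    case 2
    then have "gdist V1 E1 (fst u) (fst v) \<le> Suc (gdist V1 E1 (fst w) (fst v))"
      using gdist_edge_le[OF _ _ k1] walk_step.hyps(1) by (auto simp: mem_Times_iff)
    then show ?thesis using 2 walk_step.IH by simp
  qed
qed

theorem gdist_cart:
  assumes conn1: "walk_connected V1 E1" and conn2: "walk_connected V2 E2"
    and "x1 \<in> V1" "y1 \<in> V1" "x2 \<in> V2" "y2 \<in> V2"
  shows "gdist (V1 \<times> V2) (cart_adj E1 E2) (x1, x2) (y1, y2) = gdist V1 E1 x1 y1 + gdist V2 E2 x2 y2"
proof (rule gdist_eqI)
  obtain k1 k2 where "walk V1 E1 x1 y1 k1" "walk V2 E2 x2 y2 k2"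
    using assms unfolding walk_connected_def by blast
  then have "walk V1 E1 x1 y1 (gdist V1 E1 x1 y1)" "walk V2 E2 x2 y2 (gdist V2 E2 x2 y2)"
    by (auto intro: walk_gdist)
  then show "walk (V1 \<times> V2) (cart_adj E1 E2) (x1, x2) (y1, y2) (gdist V1 E1 x1 y1 + gdist V2 E2 x2 y2)"
    using walk_append walk_cart_fst walk_cart_snd assms(4,5) by metis
next
  fix l
  assume "walk (V1 \<times> V2) (cart_adj E1 E2) (x1, x2) (y1, y2) l"
  from gdist_cart_sum_le_walk[OF conn1 conn2 this]
  show "gdist V1 E1 x1 y1 + gdist V2 E2 x2 y2 \<le> l" by simp
qed

section \<open>Distance in cycles and tori\<close>

definition cyc_dist :: "nat \<Rightarrow> nat \<Rightarrow> nat \<Rightarrow> nat" where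
  "cyc_dist n a b = nat (min ((int b - int a) mod int n) ((int a - int b) mod int n))"

definition wrap :: "nat \<Rightarrow> int \<Rightarrow> nat" where
  "wrap n j = nat (j mod int n)"

lemma cyc_dist_commute: "cyc_dist n a b = cyc_dist n b a"
  unfolding cyc_dist_def by (simp add: min.commute)

lemma cyc_dist_self: "cyc_dist n a a = 0"
  by (simp add: cyc_dist_def)

lemma cyc_dist_le_iff:
  assumes "0 < n"
  shows "cyc_dist n a b \<le> r \<longleftrightarrow> (\<exists>e. \<bar>e\<bar> \<le> int r \<and> (int a + e) mod int n = int b mod int n)"
proof
  assume "cyc_dist n a b \<le> r"
  then consider "(int b - int a) mod int n \<le> int r" | "(int a - int b) mod int n \<le> int r"
    unfolding cyc_dist_def by linarith
  then show "\<exists>e. \<bar>e\<bar> \<le> int r \<and> (int a + e) mod int n = int b mod int n"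
  proof cases
    case 1
    then show ?thesis using assms
      by (intro exI[of _ "(int b - int a) mod int n"]) (auto simp: mod_add_right_eq)
  next
    case 2
    have "(int a - (int a - int b) mod int n) mod int n = int b mod int n"
      by (simp add: mod_diff_right_eq)
    then show ?thesis using 2 assms
      by (intro exI[of _ "- ((int a - int b) mod int n)"]) auto
  qed
next
  assume "\<exists>e. \<bar>e\<bar> \<le> int r \<and> (int a + e) mod int n = int b mod int n"
  then obtain e where e: "\<bar>e\<bar> \<le> int r" "(int a + e) mod int n = int b mod int n" by blast
  have "(int b - int a) mod int n = ((int a + e) mod int n - int a) mod int n"
    using e(2) by (simp add: mod_diff_left_eq)
  then have fwd: "(int b - int a) mod int n = e mod int n"
    by (simp add: mod_diff_left_eq)
  have "(int a - int b) mod int n = (int a - (int a + e) mod int n) mod int n"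
    using e(2) by (simp add: mod_diff_right_eq)
  then have bwd: "(int a - int b) mod int n = (- e) mod int n"
    by (simp add: mod_diff_right_eq)
  show "cyc_dist n a b \<le> r"
  proof (cases "0 \<le> e")
    case True
    then have "e mod int n \<le> int r" using e(1) zmod_le_nonneg_dividend[OF True, of "int n"] by linarith
    then show ?thesis unfolding cyc_dist_def fwd by linarith
  next
    case False
    then have "(- e) mod int n \<le> int r" using e(1) zmod_le_nonneg_dividend[of "- e" "int n"] by linarith
    then show ?thesis unfolding cyc_dist_def bwd by linarith
  qed
qed

lemma cycle_adj_sym: "cycle_adj n a b \<Longrightarrow> cycle_adj n b a"
  unfolding cycle_adj_def by auto

lemma cycle_adj_step:
  assumes "cycle_adj n a b"
  obtains s where "\<bar>s\<bar> \<le> 1" "(int a + s) mod int n = int b mod int n"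
proof -
  from assms have ab: "a < n" "b < n" and "b = (a + 1) mod n \<or> a = (b + 1) mod n"
    unfolding cycle_adj_def by auto
  then consider "int b = (int a + 1) mod int n" | "int a = (int b + 1) mod int n"
    by (metis of_nat_1 of_nat_add zmod_int)
  then show thesis
  proof cases
    case 1
    then show thesis using that[of 1] ab by simp
  next
    case 2
    then have "(int a - 1) mod int n = int b mod int n" by (simp add: mod_diff_left_eq)
    then show thesis using that[of "- 1"] by simp
  qed
qed

lemma cyc_dist_adj_le:
  assumes "cycle_adj n a b"
  shows "cyc_dist n a c \<le> Suc (cyc_dist n b c)"
proof -
  have n: "0 < n" using assms unfolding cycle_adj_def by auto
  obtain s where s: "\<bar>s\<bar> \<le> 1" "(int a + s) mod int n = int b mod int n"
    using cycle_adj_step[OF assms] .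
  obtain e where e: "\<bar>e\<bar> \<le> int (cyc_dist n b c)" "(int b + e) mod int n = int c mod int n"
    using cyc_dist_le_iff[OF n] by blast
  have "(int a + (s + e)) mod int n = ((int a + s) mod int n + e) mod int n"
    by (simp add: mod_add_left_eq add.assoc)
  also have "\<dots> = int c mod int n" using s(2) e(2) by (simp add: mod_add_left_eq)
  finally show ?thesis
    using cyc_dist_le_iff[OF n, of a c "Suc (cyc_dist n b c)"] s(1) e(1) by auto
qed

lemma cyc_dist_le_walk: "walk {0..<n} (cycle_adj n) a b k \<Longrightarrow> cyc_dist n a b \<le> k"
proof (induction rule: walk.induct)
  case (walk_refl u)
  then show ?case by (simp add: cyc_dist_self)
next
  case (walk_step u w v k)
  then show ?case using cyc_dist_adj_le[of n u w v] by simp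
qed

lemma walk_cycle_forward:
  assumes "2 \<le> n" "a < n"
  shows "walk {0..<n} (cycle_adj n) a ((a + t) mod n) t"
  using assms(2)
proof (induction t arbitrary: a)
  case 0
  then show ?case by (simp add: walk_refl)
next
  case (Suc t)
  have "cycle_adj n a ((a + 1) mod n)"
    using assms(1) Suc.prems by (auto simp: cycle_adj_def mod_Suc)
  moreover have "walk {0..<n} (cycle_adj n) ((a + 1) mod n) ((a + Suc t) mod n) t"
    using Suc.IH[of "(a + 1) mod n"] assms(1) by (simp add: mod_add_left_eq)
  ultimately show ?case using Suc.prems by (auto intro: walk_step)
qed

lemma walk_cycle_cyc_dist:
  assumes "2 \<le> n" "a < n" "b < n"
  shows "walk {0..<n} (cycle_adj n) a b (cyc_dist n a b)"
proof -
  define t where "t a b = nat ((int b - int a) mod int n)" for a b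
  have lands: "(a + t a b) mod n = b" if "a < n" "b < n" for a b
  proof -
    have t: "int (t a b) = (int b - int a) mod int n"
      using assms(1) by (simp add: t_def)
    have "int ((a + t a b) mod n) = (int a + int (t a b)) mod int n"
      by (simp only: zmod_int of_nat_add)
    also have "\<dots> = int b" using that t by (simp add: mod_add_right_eq)
    finally show ?thesis by simp
  qed
  consider "cyc_dist n a b = t a b" | "cyc_dist n a b = t b a"
    unfolding cyc_dist_def t_def min_def
    by (cases "(int b - int a) mod int n \<le> (int a - int b) mod int n") simp_all
  then show ?thesis
  proof cases
    case 1
    then show ?thesis using walk_cycle_forward[OF assms(1,2), of "t a b"] lands assms by simp
  next
    case 2
    have "walk {0..<n} (cycle_adj n) b a (t b a)"
      using walk_cycle_forward[OF assms(1,3), of "t b a"] lands assms by simp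
    then have "walk {0..<n} (cycle_adj n) a b (t b a)"
      by (rule walk_rev[rotated]) (rule cycle_adj_sym)
    then show ?thesis using 2 by simp
  qed
qed

theorem gdist_cycle:
  assumes "2 \<le> n" "a < n" "b < n"
  shows "gdist {0..<n} (cycle_adj n) a b = cyc_dist n a b"
  using walk_cycle_cyc_dist[OF assms] cyc_dist_le_walk by (rule gdist_eqI)

lemma walk_connected_cycle: "2 \<le> n \<Longrightarrow> walk_connected {0..<n} (cycle_adj n)"
  unfolding walk_connected_def by (auto intro!: exI walk_cycle_cyc_dist)

theorem gdist_torus:
  assumes "2 \<le> m" "2 \<le> n" "a < m" "c < m" "b < n" "d < n"
  shows "gdist (torus_V m n) (torus_E m n) (a, b) (c, d) = cyc_dist m a c + cyc_dist n b d"
  using gdist_cart[OF walk_connected_cycle[OF assms(1)] walk_connected_cycle[OF assms(2)]]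
    gdist_cycle assms
  unfolding torus_V_def torus_E_def by simp

lemma int_wrap: "0 < n \<Longrightarrow> int (wrap n j) = j mod int n"
  unfolding wrap_def by simp

lemma wrap_less: "0 < n \<Longrightarrow> wrap n j < n"
  unfolding wrap_def by (simp add: nat_less_iff)

lemma wrap_of_nat: "a < n \<Longrightarrow> wrap n (int a) = a"
  unfolding wrap_def by (simp add: zmod_int)

lemma wrap_mod: "wrap n (j mod int n) = wrap n j"
  unfolding wrap_def by simp

lemma cyc_dist_wrap_le:
  assumes "0 < n" "b < n" "cyc_dist n (wrap n j) b \<le> r"
  obtains e where "\<bar>e\<bar> \<le> int r" "b = wrap n (j + e)"
proof -
  obtain e where e: "\<bar>e\<bar> \<le> int r" "(int (wrap n j) + e) mod int n = int b mod int n"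
    using assms cyc_dist_le_iff by blast
  have "int (wrap n (j + e)) = int b"
    using e(2) assms(1,2) by (simp add: int_wrap mod_add_left_eq)
  then show thesis using that e(1) by simp
qed

lemma cyc_dist_wrap_shift:
  assumes "0 < n" "2 * \<bar>e\<bar> \<le> int n"
  shows "cyc_dist n (wrap n j) (wrap n (j + e)) = nat \<bar>e\<bar>"
proof (rule antisym)
  have "(int (wrap n j) + e) mod int n = int (wrap n (j + e)) mod int n"
    using assms(1) by (simp add: int_wrap mod_add_left_eq)
  then show "cyc_dist n (wrap n j) (wrap n (j + e)) \<le> nat \<bar>e\<bar>"
    using cyc_dist_le_iff[OF assms(1)] by fastforce
next
  show "nat \<bar>e\<bar> \<le> cyc_dist n (wrap n j) (wrap n (j + e))"
  proof (rule ccontr)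
    assume short: "\<not> nat \<bar>e\<bar> \<le> cyc_dist n (wrap n j) (wrap n (j + e))"
    obtain e' where e': "\<bar>e'\<bar> \<le> int (cyc_dist n (wrap n j) (wrap n (j + e)))"
      "(int (wrap n j) + e') mod int n = int (wrap n (j + e)) mod int n"
      using cyc_dist_le_iff[OF assms(1)] by blast
    then have lt: "\<bar>e'\<bar> < \<bar>e\<bar>" using short by linarith
    from e'(2) have "(j + e') mod int n = (j + e) mod int n"
      using assms(1) by (simp add: int_wrap mod_add_left_eq)
    then have dvd: "int n dvd e - e'" by (metis add_diff_cancel_left mod_eq_dvd_iff)
    have bound: "\<bar>e - e'\<bar> < int n" using lt assms(2) by linarith
    have "e - e' = 0"
    proof (rule ccontr)
      assume "e - e' \<noteq> 0"
      then have "\<bar>int n\<bar> \<le> \<bar>e - e'\<bar>" using dvd by (rule dvd_imp_le_int)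
      then show False using bound by simp
    qed
    then show False using lt by simp
  qed
qed

lemma card_cyc_ball:
  assumes "a < n"
  shows "card {b. b < n \<and> cyc_dist n a b \<le> r} \<le> 2 * r + 1"
proof -
  have n: "0 < n" using assms by simp
  have "{b. b < n \<and> cyc_dist n a b \<le> r} \<subseteq> (\<lambda>e. wrap n (int a + e)) ` {- int r..int r}"
  proof
    fix b assume "b \<in> {b. b < n \<and> cyc_dist n a b \<le> r}"
    then have "b < n" "cyc_dist n (wrap n (int a)) b \<le> r"
      using assms by (auto simp: wrap_of_nat)
    then obtain e where "\<bar>e\<bar> \<le> int r" "b = wrap n (int a + e)"
      using cyc_dist_wrap_le n by blast
    then show "b \<in> (\<lambda>e. wrap n (int a + e)) ` {- int r..int r}"
      by (intro image_eqI[of _ _ e]) auto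
  qed
  then have "card {b. b < n \<and> cyc_dist n a b \<le> r} \<le> card {- int r..int r}"
    using card_mono[OF finite_imageI[OF finite_atLeastAtMost_int]] card_image_le[OF finite_atLeastAtMost_int]
    by (meson order_trans)
  then show ?thesis by simp
qed

lemma mem_torus_V [simp]: "(a, b) \<in> torus_V m n \<longleftrightarrow> a < m \<and> b < n"
  unfolding torus_V_def by simp

lemma cyc_dist_add:
  assumes "b + e < n" "2 * e \<le> n"
  shows "cyc_dist n b (b + e) = e"
proof -
  have "cyc_dist n (wrap n (int b)) (wrap n (int b + int e)) = nat \<bar>int e\<bar>"
    using assms by (intro cyc_dist_wrap_shift) auto
  moreover have "wrap n (int b + int e) = b + e"
    using wrap_of_nat[OF assms(1)] by simp
  ultimately show ?thesis using assms(1) by (simp add: wrap_of_nat)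
qed

lemma cyc_dist_last_first:
  assumes "2 \<le> n"
  shows "cyc_dist n (n - 1) 0 = 1"
proof -
  have "cyc_dist n (wrap n (int (n - 1))) (wrap n (int (n - 1) + 1)) = 1"
    using cyc_dist_wrap_shift[of n 1 "int (n - 1)"] assms by simp
  moreover have "wrap n (int (n - 1)) = n - 1" using assms by (intro wrap_of_nat) simp
  moreover have "wrap n (int (n - 1) + 1) = 0" using assms by (simp add: wrap_def of_nat_diff)
  ultimately show ?thesis by simp
qed

definition col_sum :: "nat \<Rightarrow> (nat \<times> nat \<Rightarrow> nat) \<Rightarrow> nat \<Rightarrow> nat" where
  "col_sum m f j = (\<Sum>i<m. f (i, j))"

lemma sum_torus: "(\<Sum>v\<in>torus_V m n. g v) = (\<Sum>j<n. \<Sum>i<m. g (i, j))"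
proof -
  have "(\<Sum>v\<in>torus_V m n. g v) = (\<Sum>i<m. \<Sum>j<n. g (i, j))"
    unfolding torus_V_def atLeast0LessThan by (simp add: sum.cartesian_product)
  then show ?thesis by (simp add: sum.swap[of _ "{..<m}"])
qed

lemma bcost_torus: "bcost (torus_V m n) f = (\<Sum>j<n. col_sum m f j)"
  unfolding bcost_def sum_torus col_sum_def ..

section \<open>An optimal broadcast\<close>

definition zigzag_row :: "nat \<Rightarrow> nat" where
  "zigzag_row j = 3 * (j div 2 mod 2)"

(* For n mod 4 = 2 the columns n - 2 and 0 both carry their 2-broadcast in row 0, and rows 2 to 4
   of column n - 1 are left to the extra 1-broadcast. *)
definition zigzag :: "nat \<Rightarrow> nat \<times> nat \<Rightarrow> nat" where
  "zigzag n = (\<lambda>(i, j). (if even j \<and> i = zigzag_row j then 2 else 0)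
                      + (if n mod 4 = 2 \<and> j = n - 1 \<and> i = 3 then 1 else 0))"

lemma zigzag_row_cases: "zigzag_row j = 0 \<or> zigzag_row j = 3"
  unfolding zigzag_row_def by auto

lemma zigzag_row_less: "zigzag_row j < 6"
  using zigzag_row_cases[of j] by auto

lemma zigzag_row_add2: "zigzag_row (j + 2) = 3 - zigzag_row j"
  unfolding zigzag_row_def by (cases "even (j div 2)") (auto simp: odd_iff_mod_2_eq_one)

lemma zigzag_even:
  assumes "even j"
  shows "zigzag n (zigzag_row j, j) = 2"
proof -
  have "\<not> (n mod 4 = 2 \<and> j = n - 1)" using assms by presburger
  then show ?thesis using assms unfolding zigzag_def by auto
qed

lemma zigzag_le_2: "zigzag n v \<le> 2"
proof -
  have "\<not> (even (snd v) \<and> n mod 4 = 2 \<and> snd v = n - 1)" by presburger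
  then show ?thesis unfolding zigzag_def by (auto split: prod.splits)
qed

lemma cyc_dist_6_le_2_or_antipode:
  "r = 0 \<or> r = 3 \<Longrightarrow> a < 6 \<Longrightarrow> cyc_dist 6 a r \<le> 2 \<or> a = 3 - r"
  by (auto simp: cyc_dist_def less_Suc_eq numeral_eq_Suc)

lemma cyc_dist_6_opposite_rows_cover:
  "r = 0 \<or> r = 3 \<Longrightarrow> a < 6 \<Longrightarrow> cyc_dist 6 a r \<le> 1 \<or> cyc_dist 6 a (3 - r) \<le> 1"
  by (auto simp: cyc_dist_def less_Suc_eq numeral_eq_Suc)

definition hears :: "nat \<Rightarrow> (nat \<times> nat \<Rightarrow> nat) \<Rightarrow> nat \<times> nat \<Rightarrow> bool" where
  "hears n f u \<longleftrightarrow> (\<exists>v\<in>torus_V 6 n. 0 < f v \<and> gdist (torus_V 6 n) (torus_E 6 n) u v \<le> f v)"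

lemma zigzag_hears_via_even_column:
  assumes "2 \<le> n" "even j" "j < n" "a < 6" "b < n"
    and "cyc_dist 6 a (zigzag_row j) + cyc_dist n b j \<le> 2"
  shows "hears n (zigzag n) (a, b)"
  unfolding hears_def using assms zigzag_even[of j n] zigzag_row_less[of j]
    gdist_torus[of 6 n a "zigzag_row j" b j]
  by (intro bexI[of _ "(zigzag_row j, j)"]) auto

lemma zigzag_hears_last_column:
  assumes n: "6 \<le> n" "even n" and a: "a < 6"
    and near: "cyc_dist 6 a (3 - zigzag_row (n - 2)) \<le> 1"
  shows "hears n (zigzag n) (a, n - 1)"
proof (cases "n mod 4 = 0")
  case True
  then have "(n - 2) div 2 mod 2 = 1" using n by presburger
  then have "zigzag_row (n - 2) = 3" unfolding zigzag_row_def by simp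
  then show ?thesis
    using zigzag_hears_via_even_column[of n 0 a "n - 1"] near cyc_dist_last_first n a
    by (simp add: zigzag_row_def)
next
  case False
  then have n2: "n mod 4 = 2" using n(2) by presburger
  then have "(n - 2) div 2 mod 2 = 0" by presburger
  then have "cyc_dist 6 a 3 \<le> 1" using near unfolding zigzag_row_def by simp
  moreover have "odd (n - 1)" using n2 by presburger
  then have "zigzag n (3, n - 1) = 1" using n2 unfolding zigzag_def by simp
  ultimately show ?thesis
    unfolding hears_def using gdist_torus[of 6 n a 3 "n - 1" "n - 1"] n a
    by (intro bexI[of _ "(3, n - 1)"]) (auto simp: cyc_dist_self)
qed

lemma zigzag_hears_even_column:
  assumes n: "6 \<le> n" and a: "a < 6" and b: "b < n" "even b"
  shows "hears n (zigzag n) (a, b)"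
proof -
  consider "cyc_dist 6 a (zigzag_row b) \<le> 2" | "a = 3 - zigzag_row b"
    using cyc_dist_6_le_2_or_antipode[OF zigzag_row_cases a] by blast
  then show ?thesis
  proof cases
    case 1
    then show ?thesis using zigzag_hears_via_even_column[of n b a b] n a b by (simp add: cyc_dist_self)
  next
    case 2
    show ?thesis
    proof (cases "b + 2 < n")
      case True
      then show ?thesis
        using zigzag_hears_via_even_column[of n "b + 2" a b] 2 n a b cyc_dist_add[OF True] zigzag_row_add2
        by (simp add: cyc_dist_self)
    next
      case False
      define c where "c = b - 2"
      have c: "b = c + 2" using False n unfolding c_def by simp
      have "zigzag_row c = a" using 2 zigzag_row_add2[of c] zigzag_row_cases[of c] c by auto
      moreover have "cyc_dist n b c = 2"
        using cyc_dist_add[of c 2 n] c b n by (simp add: cyc_dist_commute)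
      ultimately show ?thesis using zigzag_hears_via_even_column[of n c a b] n a b c by (simp add: cyc_dist_self)
    qed
  qed
qed

lemma zigzag_hears_odd_column:
  assumes n: "6 \<le> n" and a: "a < 6" and b: "b < n" "odd b"
  shows "hears n (zigzag n) (a, b)"
proof -
  define p where "p = b - 1"
  have p: "b = p + 1" "even p" using b(2) unfolding p_def by presburger+
  have bp: "cyc_dist n b p = 1" using cyc_dist_add[of p 1 n] p b n by (simp add: cyc_dist_commute)
  consider "cyc_dist 6 a (zigzag_row p) \<le> 1" | "cyc_dist 6 a (3 - zigzag_row p) \<le> 1"
    using cyc_dist_6_opposite_rows_cover[OF zigzag_row_cases a] by blast
  then show ?thesis
  proof cases
    case 1
    then show ?thesis using zigzag_hears_via_even_column[of n p a b] n a b p bp by simp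
  next
    case 2
    show ?thesis
    proof (cases "b + 1 < n")
      case True
      then show ?thesis
        using zigzag_hears_via_even_column[of n "b + 1" a b] 2 n a b p cyc_dist_add[OF True] zigzag_row_add2[of p]
        by simp
    next
      case False
      then have "b = n - 1" "p = n - 2" using b p by auto
      moreover have "even n" using \<open>b = n - 1\<close> b(2) n by presburger
      ultimately show ?thesis using zigzag_hears_last_column n a 2 by simp
    qed
  qed
qed

lemma zigzag_dominating:
  assumes "6 \<le> n"
  shows "dom_broadcast2 (torus_V 6 n) (torus_E 6 n) (zigzag n)"
  unfolding dom_broadcast2_def
proof (intro conjI ballI)
  fix v show "zigzag n v \<le> 2" by (rule zigzag_le_2)
next
  fix u assume "u \<in> torus_V 6 n"
  then obtain a b where "u = (a, b)" "a < 6" "b < n" by (cases u) auto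
  then have "hears n (zigzag n) u"
    using zigzag_hears_even_column zigzag_hears_odd_column assms by blast
  then show "\<exists>v\<in>torus_V 6 n. 0 < zigzag n v \<and> gdist (torus_V 6 n) (torus_E 6 n) u v \<le> zigzag n v"
    unfolding hears_def .
qed

lemma sum_even_indicator: "(\<Sum>j<n. if even j then 2 else 0 :: nat) = 2 * ((n + 1) div 2)"
  by (induction n) auto

lemma zigzag_cost:
  assumes "6 \<le> n"
  shows "bcost (torus_V 6 n) (zigzag n) = n + (if n mod 4 = 0 then 0 else 1)"
proof -
  have col: "col_sum 6 (zigzag n) j =
      (if even j then 2 else 0) + (if n mod 4 = 2 \<and> j = n - 1 then 1 else 0)" for j
  proof -
    have "zigzag n (i, j) = (if i = zigzag_row j then (if even j then 2 else 0) else 0)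
        + (if i = 3 then (if n mod 4 = 2 \<and> j = n - 1 then 1 else 0) else 0)" for i
      unfolding zigzag_def by simp
    then show ?thesis using zigzag_row_less[of j] by (simp add: col_sum_def sum.distrib)
  qed
  have last: "(\<Sum>j<n. if n mod 4 = 2 \<and> j = n - 1 then 1 else 0 :: nat) = (if n mod 4 = 2 then 1 else 0)"
    using assms by (simp add: sum.delta')
  have "bcost (torus_V 6 n) (zigzag n) = 2 * ((n + 1) div 2) + (if n mod 4 = 2 then 1 else 0)"
    unfolding bcost_torus col sum.distrib sum_even_indicator last ..
  then show ?thesis by presburger
qed

section \<open>Vertices of a column that hear a broadcast\<close>

lemma dominating_le_2:
  "dom_broadcast2 (torus_V 6 n) (torus_E 6 n) f \<Longrightarrow> i < 6 \<Longrightarrow> j < n \<Longrightarrow> f (i, j) \<le> 2"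
  unfolding dom_broadcast2_def by simp

definition reach :: "nat \<Rightarrow> nat \<Rightarrow> nat" where
  "reach d s = (if 0 < s \<and> d \<le> s then 2 * (s - d) + 1 else 0)"

definition rows_reached :: "(nat \<times> nat \<Rightarrow> nat) \<Rightarrow> nat \<Rightarrow> nat \<Rightarrow> nat" where
  "rows_reached f d j = (\<Sum>i<6. reach d (f (i, j)))"

lemma card_rows_hearing:
  assumes "2 \<le> n" "J < n" "r < 6" "j < n"
  shows "card {i. i < 6 \<and> 0 < f (r, j) \<and> gdist (torus_V 6 n) (torus_E 6 n) (i, J) (r, j) \<le> f (r, j)}
    \<le> reach (cyc_dist n J j) (f (r, j))" (is "card ?H \<le> _")
proof (cases "0 < f (r, j) \<and> cyc_dist n J j \<le> f (r, j)")
  case True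
  have "?H \<subseteq> {i. i < 6 \<and> cyc_dist 6 r i \<le> f (r, j) - cyc_dist n J j}"
    using gdist_torus[of 6 n _ r J j] assms by (auto simp: cyc_dist_commute)
  then have "card ?H \<le> card {i. i < 6 \<and> cyc_dist 6 r i \<le> f (r, j) - cyc_dist n J j}"
    by (intro card_mono) auto
  also have "\<dots> \<le> 2 * (f (r, j) - cyc_dist n J j) + 1" using card_cyc_ball assms(3) .
  finally show ?thesis using True unfolding reach_def by simp
next
  case False
  then have "?H = {}" using gdist_torus[of 6 n _ r J j] assms by auto
  then show ?thesis by (simp only: card.empty)
qed

lemma dominating_column_reach:
  assumes dom: "dom_broadcast2 (torus_V 6 n) (torus_E 6 n) f" and n: "2 \<le> n" and J: "J < n"
  shows "6 \<le> (\<Sum>j<n. rows_reached f (cyc_dist n J j) j)"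
proof -
  let ?V = "torus_V 6 n"
  define H where "H v = {i. i < 6 \<and> 0 < f v \<and> gdist ?V (torus_E 6 n) (i, J) v \<le> f v}" for v
  have fin: "finite ?V" unfolding torus_V_def by simp
  have "{..<6} \<subseteq> (\<Union>v\<in>?V. H v)"
  proof
    fix i :: nat assume "i \<in> {..<6}"
    then have "(i, J) \<in> ?V" using J by simp
    then obtain v where "v \<in> ?V" "0 < f v" "gdist ?V (torus_E 6 n) (i, J) v \<le> f v"
      using dom unfolding dom_broadcast2_def by blast
    then show "i \<in> (\<Union>v\<in>?V. H v)" using \<open>i \<in> {..<6}\<close> unfolding H_def by blast
  qed
  then have "6 \<le> card (\<Union>v\<in>?V. H v)"
    using card_mono[OF _ \<open>{..<6} \<subseteq> _\<close>] fin unfolding H_def by simp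
  also have "\<dots> \<le> (\<Sum>v\<in>?V. card (H v))" using fin by (rule card_UN_le)
  also have "\<dots> \<le> (\<Sum>v\<in>?V. reach (cyc_dist n J (snd v)) (f v))"
    using card_rows_hearing[OF n J] unfolding H_def by (intro sum_mono) auto
  also have "\<dots> = (\<Sum>j<n. rows_reached f (cyc_dist n J j) j)"
    unfolding sum_torus rows_reached_def by simp
  finally show ?thesis .
qed

lemma rows_reached_far:
  assumes "\<And>i. i < 6 \<Longrightarrow> f (i, j) \<le> 2" "2 < d"
  shows "rows_reached f d j = 0"
proof -
  have "reach d (f (i, j)) = 0" if "i < 6" for i
    using assms(1)[OF that] assms(2) unfolding reach_def by auto
  then show ?thesis unfolding rows_reached_def by simp
qed

lemma column_reach_five:
  assumes dom: "dom_broadcast2 (torus_V 6 n) (torus_E 6 n) f" and n: "4 \<le> n"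
  shows "6 \<le> rows_reached f 0 (wrap n j) + rows_reached f 1 (wrap n (j - 1)) + rows_reached f 1 (wrap n (j + 1))
    + rows_reached f 2 (wrap n (j - 2)) + rows_reached f 2 (wrap n (j + 2))"
proof -
  let ?J = "wrap n j"
  define G where "G j' = rows_reached f (cyc_dist n ?J j') j'" for j'
  define E :: "int set" where "E = {-2, -1, 0, 1, 2}"
  have n0: "0 < n" using n by simp
  have "{j'. j' < n \<and> cyc_dist n ?J j' \<le> 2} \<subseteq> (\<lambda>e. wrap n (j + e)) ` E"
  proof
    fix j' assume "j' \<in> {j'. j' < n \<and> cyc_dist n ?J j' \<le> 2}"
    then have "j' < n" "cyc_dist n ?J j' \<le> 2" by auto
    then obtain e where "\<bar>e\<bar> \<le> int 2" "j' = wrap n (j + e)"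
      by (rule cyc_dist_wrap_le[OF n0])
    moreover from \<open>\<bar>e\<bar> \<le> int 2\<close> have "e \<in> E" unfolding E_def by auto
    ultimately show "j' \<in> (\<lambda>e. wrap n (j + e)) ` E" by blast
  qed
  have "6 \<le> (\<Sum>j'<n. G j')"
    using dominating_column_reach[OF dom _ wrap_less[OF n0]] n unfolding G_def by simp
  also have "\<dots> = (\<Sum>j'\<in>{j'. j' < n \<and> cyc_dist n ?J j' \<le> 2}. G j')"
  proof (intro sum.mono_neutral_right ballI)
    fix j' assume "j' \<in> {..<n} - {j'. j' < n \<and> cyc_dist n ?J j' \<le> 2}"
    then have "j' < n" "2 < cyc_dist n ?J j'" by auto
    then show "G j' = 0"
      unfolding G_def using rows_reached_far dominating_le_2[OF dom] by blast
  qed auto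
  also have "\<dots> \<le> (\<Sum>j'\<in>(\<lambda>e. wrap n (j + e)) ` E. G j')"
    using \<open>{j'. _} \<subseteq> _\<close> by (intro sum_mono2) (auto simp: E_def)
  also have "\<dots> \<le> (\<Sum>e\<in>E. G (wrap n (j + e)))"
    using sum_image_le[of E G "\<lambda>e. wrap n (j + e)"] by (simp add: E_def)
  also have "\<dots> = (\<Sum>e\<in>E. rows_reached f (nat \<bar>e\<bar>) (wrap n (j + e)))"
  proof (rule sum.cong[OF refl])
    fix e assume "e \<in> E"
    then have "2 * \<bar>e\<bar> \<le> int n" using n unfolding E_def by auto
    then show "G (wrap n (j + e)) = rows_reached f (nat \<bar>e\<bar>) (wrap n (j + e))"
      unfolding G_def using cyc_dist_wrap_shift[OF n0] by presburger
  qed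
  finally show ?thesis by (simp add: E_def)
qed

lemma reach_bounds:
  assumes "s \<le> 2"
  shows "reach 0 s \<le> 3 * s" "2 * reach 1 s \<le> 3 * s" "2 * reach 2 s \<le> s"
proof -
  from assms consider "s = 0" | "s = 1" | "s = 2" by linarith
  then show "reach 0 s \<le> 3 * s" "2 * reach 1 s \<le> 3 * s" "2 * reach 2 s \<le> s"
    by (cases; simp add: reach_def)+
qed

lemma rows_reached_le:
  assumes "\<And>i. i < 6 \<Longrightarrow> f (i, j) \<le> 2"
  shows "rows_reached f 0 j \<le> 3 * col_sum 6 f j"
    and "rows_reached f 1 j \<le> 3 * col_sum 6 f j div 2"
    and "rows_reached f 2 j \<le> col_sum 6 f j div 2"
proof -
  have "rows_reached f 0 j \<le> (\<Sum>i<6. 3 * f (i, j))"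
    unfolding rows_reached_def using reach_bounds(1) assms by (intro sum_mono) auto
  then show "rows_reached f 0 j \<le> 3 * col_sum 6 f j"
    by (simp add: col_sum_def sum_distrib_left)
  have "2 * rows_reached f 1 j \<le> (\<Sum>i<6. 3 * f (i, j))"
    unfolding rows_reached_def sum_distrib_left using reach_bounds(2) assms by (intro sum_mono) auto
  then show "rows_reached f 1 j \<le> 3 * col_sum 6 f j div 2"
    by (simp add: col_sum_def sum_distrib_left)
  have "2 * rows_reached f 2 j \<le> (\<Sum>i<6. f (i, j))"
    unfolding rows_reached_def sum_distrib_left using reach_bounds(3) assms by (intro sum_mono) auto
  then show "rows_reached f 2 j \<le> col_sum 6 f j div 2"
    by (simp add: col_sum_def)
qed

lemma rows_reached_1_ge_3_obtains_2:
  assumes "\<And>i. i < 6 \<Longrightarrow> f (i, j) \<le> 2" "col_sum 6 f j = 2" "3 \<le> rows_reached f 1 j"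
  obtains r where "r < 6" "f (r, j) = 2"
proof -
  have "\<exists>r<6. f (r, j) = 2"
  proof (rule ccontr)
    assume "\<not> (\<exists>r<6. f (r, j) = 2)"
    then have le1: "f (i, j) \<le> 1" if "i < 6" for i using that assms(1)[OF that] by fastforce
    have "reach 1 (f (i, j)) = f (i, j)" if "i < 6" for i
      using le1[OF that] by (auto simp: reach_def le_Suc_eq)
    then have "rows_reached f 1 j = col_sum 6 f j"
      unfolding rows_reached_def col_sum_def by simp
    then show False using assms(2,3) by simp
  qed
  then show thesis using that by blast
qed

definition load :: "nat \<Rightarrow> (nat \<times> nat \<Rightarrow> nat) \<Rightarrow> int \<Rightarrow> nat" where
  "load n f j = col_sum 6 f (wrap n j)"

definition cover_weight :: "(int \<Rightarrow> nat) \<Rightarrow> int \<Rightarrow> nat" where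
  "cover_weight x j = 3 * x j + 3 * x (j - 1) div 2 + 3 * x (j + 1) div 2 + x (j - 2) div 2 + x (j + 2) div 2"

lemma dominating_cover_weight:
  assumes dom: "dom_broadcast2 (torus_V 6 n) (torus_E 6 n) f" and n: "4 \<le> n"
  shows "6 \<le> cover_weight (load n f) j"
proof -
  have le2: "f (i, wrap n k) \<le> 2" if "i < 6" for i k
    using dominating_le_2[OF dom that wrap_less] n by simp
  note bounds = rows_reached_le[of f "wrap n k" for k, OF le2, folded load_def]
  show ?thesis
    using column_reach_five[OF dom n, of j] bounds(1)[of j] bounds(2)[of "j - 1"] bounds(2)[of "j + 1"]
      bounds(3)[of "j - 2"] bounds(3)[of "j + 2"]
    unfolding cover_weight_def by linarith
qed

section \<open>Discharging along the cycle of columns\<close>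

(* Column loads fall into the classes 0, 1, 2, 3, {4, 5} and {6, ...}.  On each class, the three
   kinds of contribution to cover_weight, capped at 6, are bounded by center_cap, side_cap and
   far_cap, and class_floor is the least load; this turns transfer_window into a finite check. *)
definition load_class :: "nat \<Rightarrow> nat" where
  "load_class c = (if c \<le> 3 then c else if c \<le> 5 then 4 else 5)"

definition class_floor :: "nat list" where "class_floor = [0, 1, 2, 3, 4, 6]"
definition center_cap :: "nat list" where "center_cap = [0, 3, 6, 6, 6, 6]"
definition side_cap :: "nat list" where "side_cap = [0, 1, 3, 4, 6, 6]"
definition far_cap :: "nat list" where "far_cap = [0, 0, 1, 1, 2, 6]"

(* Found by linear programming.  In periodic_cover_bound the left-hand side of transfer_window
   telescopes around the cycle of columns. *)
definition transfer_table :: "int list list" where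
  "transfer_table =
    [[ 0,  1,  5,  9, 14, 23],
     [ 0,  1,  5,  9, 14, 23],
     [ 0,  3,  8, 12, 16, 25],
     [ 1,  5, 10, 14, 18, 27],
     [ 3,  8, 13, 16, 20, 29],
     [11, 14, 17, 21, 25, 33]]"

definition transfer :: "nat \<Rightarrow> nat \<Rightarrow> int" where
  "transfer c c' = transfer_table ! load_class c ! load_class c'"

lemma transfer_table_check:
  "list_all (\<lambda>ka. list_all (\<lambda>kb. list_all (\<lambda>kc. list_all (\<lambda>kd. list_all (\<lambda>ke.
     6 \<le> far_cap ! ka + side_cap ! kb + center_cap ! kc + side_cap ! kd + far_cap ! ke \<longrightarrow>
     transfer_table ! kb ! kc + transfer_table ! kd ! kc - transfer_table ! ka ! kb - transfer_table ! ke ! kd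
       \<le> 10 * (int (class_floor ! kc) - 1) - (if kc = 2 \<and> kd = 0 \<or> kc = 0 \<and> kd = 2 then 0 else 1))
   [0..<6]) [0..<6]) [0..<6]) [0..<6]) [0..<6]"
  unfolding far_cap_def side_cap_def center_cap_def class_floor_def transfer_table_def by code_simp

lemma load_class_bounds:
  "load_class c < 6 \<and> class_floor ! load_class c \<le> c
    \<and> min 6 (3 * c) \<le> center_cap ! load_class c \<and> min 6 (3 * c div 2) \<le> side_cap ! load_class c
    \<and> min 6 (c div 2) \<le> far_cap ! load_class c
    \<and> (load_class c = 0 \<longleftrightarrow> c = 0) \<and> (load_class c = 2 \<longleftrightarrow> c = 2)"
proof -
  consider "c = 0" | "c = 1" | "c = 2" | "c = 3" | "c = 4" | "c = 5" | "6 \<le> c" by linarith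
  then show ?thesis
    by cases (simp_all add: load_class_def class_floor_def center_cap_def side_cap_def far_cap_def)
qed

lemma transfer_window:
  assumes "6 \<le> 3 * c + 3 * b div 2 + 3 * d div 2 + a div 2 + e div 2"
  shows "transfer b c + transfer d c - transfer a b - transfer e d
    \<le> 10 * (int c - 1) - (if (c, d) \<in> {(2, 0), (0, 2)} then 0 else 1)"
proof -
  have check: "transfer_table ! kb ! kc + transfer_table ! kd ! kc - transfer_table ! ka ! kb - transfer_table ! ke ! kd
       \<le> 10 * (int (class_floor ! kc) - 1) - (if kc = 2 \<and> kd = 0 \<or> kc = 0 \<and> kd = 2 then 0 else 1)"
    if "ka < 6" "kb < 6" "kc < 6" "kd < 6" "ke < 6"
      "6 \<le> far_cap ! ka + side_cap ! kb + center_cap ! kc + side_cap ! kd + far_cap ! ke"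
    for ka kb kc kd ke
  proof -
    have "ka \<in> {0..<6}" "kb \<in> {0..<6}" "kc \<in> {0..<6}" "kd \<in> {0..<6}" "ke \<in> {0..<6}"
      using that by auto
    with transfer_table_check that(6) show ?thesis unfolding list_all_iff set_upt by blast
  qed
  have "6 \<le> min 6 (a div 2) + min 6 (3 * b div 2) + min 6 (3 * c) + min 6 (3 * d div 2) + min 6 (e div 2)"
    using assms by linarith
  then have "6 \<le> far_cap ! load_class a + side_cap ! load_class b + center_cap ! load_class c
      + side_cap ! load_class d + far_cap ! load_class e"
    using load_class_bounds by (smt (verit) add_mono le_trans)
  from check[OF _ _ _ _ _ this] load_class_bounds
  have w: "transfer b c + transfer d c - transfer a b - transfer e d
      \<le> 10 * (int (class_floor ! load_class c) - 1)
        - (if load_class c = 2 \<and> load_class d = 0 \<or> load_class c = 0 \<and> load_class d = 2 then 0 else 1)"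
    unfolding transfer_def by blast
  have floor: "int (class_floor ! load_class c) \<le> int c" using load_class_bounds by simp
  have "(load_class c = 2 \<and> load_class d = 0 \<or> load_class c = 0 \<and> load_class d = 2)
      \<longleftrightarrow> (c, d) \<in> {(2, 0), (0, 2)}"
    using load_class_bounds[of c] load_class_bounds[of d] by auto
  then show ?thesis using w floor by (cases "(c, d) \<in> {(2, 0), (0, 2)}") simp_all
qed

definition alternating :: "(int \<Rightarrow> nat) \<Rightarrow> int \<Rightarrow> bool" where
  "alternating x j \<longleftrightarrow> (x j, x (j + 1)) \<in> {(2, 0), (0, 2)}"

lemma periodic_cover_bound:
  fixes x :: "int \<Rightarrow> nat"
  assumes per: "\<And>j. x (j mod int n) = x j" and cover: "\<And>j. 6 \<le> cover_weight x j"
  shows "10 * n + card {j. j < n \<and> \<not> alternating x (int j)} \<le> 10 * (\<Sum>j<n. x (int j))"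
proof -
  define h where "h j = transfer (x (j - 1)) (x j) - transfer (x (j + 2)) (x (j + 1))" for j
  have shift: "x (j + int n) = x j" for j using per[of "j + int n"] per[of j] by simp
  have h_shift: "h (j + int n) = h j" for j
    unfolding h_def using shift[of "j - 1"] shift[of j] shift[of "j + 1"] shift[of "j + 2"]
    by (simp add: algebra_simps)
  have step: "h j - h (j - 1) \<le> 10 * (int (x j) - 1) - of_bool (\<not> alternating x j)" for j
  proof -
    have "j - 1 - 1 = j - 2" "j - 1 + 2 = j + 1" "j - 1 + 1 = j" by simp_all
    then have "h j - h (j - 1) = transfer (x (j - 1)) (x j) + transfer (x (j + 1)) (x j)
        - transfer (x (j - 2)) (x (j - 1)) - transfer (x (j + 2)) (x (j + 1))"
      unfolding h_def by (simp add: add.commute)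
    moreover have "of_bool (\<not> alternating x j) = (if (x j, x (j + 1)) \<in> {(2, 0), (0, 2)} then 0 else 1 :: int)"
      unfolding alternating_def by simp
    ultimately show ?thesis
      using transfer_window[of "x j" "x (j - 1)" "x (j + 1)" "x (j - 2)" "x (j + 2)"] cover[of j]
      unfolding cover_weight_def by linarith
  qed
  have "0 = h (int n - 1) - h (- 1)" using h_shift[of "- 1"] by simp
  also have "\<dots> = (\<Sum>i<n. h (int i) - h (int i - 1))"
    using sum_lessThan_telescope[of "\<lambda>i. h (int i - 1)" n] by simp
  also have "\<dots> \<le> (\<Sum>i<n. 10 * (int (x (int i)) - 1) - of_bool (\<not> alternating x (int i)))"
    by (intro sum_mono step)
  also have "\<dots> = 10 * int (\<Sum>i<n. x (int i)) - 10 * int n - (\<Sum>i<n. of_bool (\<not> alternating x (int i)))"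
    by (simp add: sum_subtractf sum_distrib_left right_diff_distrib)
  also have "(\<Sum>i<n. of_bool (\<not> alternating x (int i))) = int (card {j. j < n \<and> \<not> alternating x (int j)})"
    by (simp add: lessThan_def Collect_conj_eq)
  finally show ?thesis by linarith
qed

section \<open>Broadcasts of cost n\<close>

lemma load_mod: "load n f (j mod int n) = load n f j"
  unfolding load_def by (simp add: wrap_mod)

lemma sum_load: "(\<Sum>j<n. load n f (int j)) = bcost (torus_V 6 n) f"
  unfolding load_def bcost_torus by (simp add: wrap_of_nat)

lemma dominating_cost_ge:
  assumes "dom_broadcast2 (torus_V 6 n) (torus_E 6 n) f" "4 \<le> n"
  shows "n \<le> bcost (torus_V 6 n) f"
  using periodic_cover_bound[of "load n f" n, OF load_mod dominating_cover_weight[OF assms]]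
  unfolding sum_load by linarith

lemma dominating_cost_eq_alternating:
  assumes dom: "dom_broadcast2 (torus_V 6 n) (torus_E 6 n) f" and n: "4 \<le> n"
    and cost: "bcost (torus_V 6 n) f = n"
  shows "alternating (load n f) j"
proof -
  let ?x = "load n f"
  have "card {j. j < n \<and> \<not> alternating ?x (int j)} = 0"
    using periodic_cover_bound[of ?x n, OF load_mod dominating_cover_weight[OF dom n]] cost
    unfolding sum_load by linarith
  then have alt: "alternating ?x (int k)" if "k < n" for k
    using that by (simp add: card_eq_0_iff)
  have "alternating ?x (int (nat (j mod int n)))" using n by (intro alt) (simp add: nat_less_iff)
  moreover have "?x (j mod int n + 1) = ?x (j + 1)"
    using load_mod[of n f "j mod int n + 1"] load_mod[of n f "j + 1"] by (simp add: mod_add_left_eq)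
  ultimately show ?thesis using n load_mod[of n f j] unfolding alternating_def by simp
qed

lemma col_sum_zero: "col_sum 6 f j = 0 \<Longrightarrow> i < 6 \<Longrightarrow> f (i, j) = 0"
  unfolding col_sum_def by simp

lemma col_sum_2_single:
  assumes "col_sum 6 f j = 2" "r < 6" "f (r, j) = 2" "i < 6" "i \<noteq> r"
  shows "f (i, j) = 0"
proof -
  have "col_sum 6 f j = f (r, j) + (\<Sum>k\<in>{..<6} - {r}. f (k, j))"
    unfolding col_sum_def using assms(2) by (simp add: sum.remove)
  then show ?thesis using assms by simp
qed

lemma cyc_dist_6_covering_pair_opposite:
  "list_all (\<lambda>r. list_all (\<lambda>r'. list_all (\<lambda>t. cyc_dist 6 t r \<le> 1 \<or> cyc_dist 6 t r' \<le> 1) [0..<6]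
     \<longrightarrow> r' = (r + 3) mod 6) [0..<6]) [0..<6]"
  unfolding cyc_dist_def by code_simp

definition gap_column :: "nat \<Rightarrow> (nat \<times> nat \<Rightarrow> nat) \<Rightarrow> int \<Rightarrow> bool" where
  "gap_column n f j \<longleftrightarrow> load n f (j - 2) = 0 \<and> load n f (j - 1) = 2 \<and> load n f j = 0
    \<and> load n f (j + 1) = 2 \<and> load n f (j + 2) = 0"

lemma gap_column_neighbours:
  assumes dom: "dom_broadcast2 (torus_V 6 n) (torus_E 6 n) f" and n: "4 \<le> n" and gap: "gap_column n f j"
  obtains rL rR where "rL < 6" "f (rL, wrap n (j - 1)) = 2" "rR < 6" "f (rR, wrap n (j + 1)) = 2"
proof -
  have le2: "f (i, wrap n k) \<le> 2" if "i < 6" for i k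
    using dominating_le_2[OF dom that wrap_less] n by simp
  note bounds = rows_reached_le[of f "wrap n k" for k, OF le2, folded load_def]
  have R1: "3 \<le> rows_reached f 1 (wrap n (j - 1))" "3 \<le> rows_reached f 1 (wrap n (j + 1))"
    using column_reach_five[OF dom n, of j] bounds(1)[of j] bounds(2)[of "j - 1"] bounds(2)[of "j + 1"]
      bounds(3)[of "j - 2"] bounds(3)[of "j + 2"] gap unfolding gap_column_def by linarith+
  show thesis
    using rows_reached_1_ge_3_obtains_2[of f "wrap n (j - 1)"]
      rows_reached_1_ge_3_obtains_2[of f "wrap n (j + 1)"] le2 gap R1 that unfolding gap_column_def load_def by metis
qed

lemma gap_column_positive_cells:
  assumes gap: "gap_column n f j" and rL: "rL < 6" "f (rL, wrap n (j - 1)) = 2"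
    and rR: "rR < 6" "f (rR, wrap n (j + 1)) = 2"
    and a: "a < 6" and e: "\<bar>e\<bar> \<le> 2" and pos: "0 < f (a, wrap n (j + e))"
  shows "e = - 1 \<and> a = rL \<or> e = 1 \<and> a = rR"
proof -
  from e consider "e = - 2" | "e = - 1" | "e = 0" | "e = 1" | "e = 2" by linarith
  then show ?thesis
  proof cases
    case 2
    then show ?thesis using col_sum_2_single[of f _ rL a] gap rL a pos
      unfolding gap_column_def load_def by fastforce
  next
    case 4
    then show ?thesis using col_sum_2_single[of f _ rR a] gap rR a pos
      unfolding gap_column_def load_def by fastforce
  qed (use gap a pos in \<open>simp_all add: gap_column_def load_def col_sum_zero\<close>)
qed

lemma gap_column_rows_covered:
  assumes dom: "dom_broadcast2 (torus_V 6 n) (torus_E 6 n) f" and n: "4 \<le> n" and gap: "gap_column n f j"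
    and rL: "rL < 6" "f (rL, wrap n (j - 1)) = 2" and rR: "rR < 6" "f (rR, wrap n (j + 1)) = 2"
    and t: "t < 6"
  shows "cyc_dist 6 t rL \<le> 1 \<or> cyc_dist 6 t rR \<le> 1"
proof -
  have n0: "0 < n" using n by simp
  have "(t, wrap n j) \<in> torus_V 6 n" using t wrap_less[OF n0] by simp
  then obtain v where v: "v \<in> torus_V 6 n" "0 < f v"
      "gdist (torus_V 6 n) (torus_E 6 n) (t, wrap n j) v \<le> f v"
    using dom unfolding dom_broadcast2_def by blast
  obtain a b where ab: "v = (a, b)" "a < 6" "b < n" using v(1) by (cases v) auto
  have dist: "cyc_dist 6 t a + cyc_dist n (wrap n j) b \<le> f (a, b)"
    using v(3) gdist_torus[of 6 n t a "wrap n j" b] ab n t wrap_less[OF n0] by simp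
  moreover have le2: "f (a, b) \<le> 2" using dominating_le_2[OF dom ab(2,3)] .
  ultimately have "cyc_dist n (wrap n j) b \<le> 2" by linarith
  then obtain e where e: "\<bar>e\<bar> \<le> int 2" "b = wrap n (j + e)"
    using cyc_dist_wrap_le[OF n0 ab(3)] by blast
  then have side: "e = - 1 \<and> a = rL \<or> e = 1 \<and> a = rR"
    using gap_column_positive_cells[OF gap rL rR ab(2)] v(2) ab(1) by simp
  then have "cyc_dist n (wrap n j) b = 1" using e(2) cyc_dist_wrap_shift[OF n0, of e j] n by auto
  then show ?thesis using dist side le2 by auto
qed

lemma gap_column_shift:
  assumes dom: "dom_broadcast2 (torus_V 6 n) (torus_E 6 n) f" and n: "4 \<le> n" and gap: "gap_column n f j"
    and r: "r < 6" "f (r, wrap n (j - 1)) = 2"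
  shows "f ((r + 3) mod 6, wrap n (j + 1)) = 2"
proof -
  obtain rL rR where rL: "rL < 6" "f (rL, wrap n (j - 1)) = 2" and rR: "rR < 6" "f (rR, wrap n (j + 1)) = 2"
    using gap_column_neighbours[OF dom n gap] by blast
  have "r = rL" using col_sum_2_single[of f _ rL r] r rL gap unfolding gap_column_def load_def by fastforce
  moreover have "rR = (rL + 3) mod 6"
    using cyc_dist_6_covering_pair_opposite rL(1) rR(1) gap_column_rows_covered[OF dom n gap rL rR]
    unfolding list_all_iff by auto
  ultimately show ?thesis using rR by simp
qed

lemma alternating_parity:
  fixes x :: "int \<Rightarrow> nat"
  assumes pair: "\<And>j. x j + x (j + 1) = 2" and h: "x h = 2"
  shows "x (h + 2 * int k) = 2 \<and> x (h + 2 * int k + 1) = 0"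
proof -
  have "x (h + 2 * int k) = 2"
  proof (induction k)
    case 0
    then show ?case using h by simp
  next
    case (Suc k)
    have eq: "h + 2 * int (Suc k) = h + 2 * int k + 1 + 1" by simp
    have "x (h + 2 * int k + 1 + 1) = 2"
      using Suc.IH pair[of "h + 2 * int k"] pair[of "h + 2 * int k + 1"] by linarith
    then show ?case unfolding eq .
  qed
  then show ?thesis using pair[of "h + 2 * int k"] by simp
qed

lemma tight_rows_orbit:
  assumes dom: "dom_broadcast2 (torus_V 6 n) (torus_E 6 n) f" and n: "4 \<le> n"
    and pair: "\<And>j. load n f j + load n f (j + 1) = 2" and h: "load n f h = 2"
    and r: "r < 6" "f (r, wrap n h) = 2"
  shows "f ((r + 3 * k) mod 6, wrap n (h + 2 * int k)) = 2"
proof (induction k)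
  case 0
  then show ?case using r by simp
next
  case (Suc k)
  define j where "j = h + 2 * int k + 1"
  have jm1: "j - 1 = h + 2 * int k" and jp1: "j + 1 = h + 2 * int (Suc k)"
    and jm2: "j - 2 + 1 = j - 1" and jp2: "j + 1 + 1 = j + 2"
    unfolding j_def by simp_all
  note parity = alternating_parity[of "load n f", OF pair h, of k]
  have "load n f (j - 1) = 2" "load n f j = 0"
    using parity unfolding jm1 j_def by simp_all
  moreover have "load n f (j + 1) = 2" using pair[of j] calculation(2) by linarith
  moreover have "load n f (j + 2) = 0" using pair[of "j + 1"] calculation(3) unfolding jp2 by linarith
  moreover have "load n f (j - 2) = 0" using pair[of "j - 2"] calculation(1) unfolding jm2 by linarith
  ultimately have gap: "gap_column n f j" unfolding gap_column_def by simp
  have "(r + 3 * k) mod 6 < 6" by simp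
  from gap_column_shift[OF dom n gap this, unfolded jm1, OF Suc.IH]
  have "f (((r + 3 * k) mod 6 + 3) mod 6, wrap n (j + 1)) = 2" .
  moreover have "((r + 3 * k) mod 6 + 3) mod 6 = (r + 3 * k + 3) mod 6" by (rule mod_add_left_eq)
  moreover have "r + 3 * k + 3 = r + 3 * Suc k" by simp
  ultimately show ?case unfolding jp1 by simp
qed

lemma rows_shift_return: "(r::nat) < 6 \<Longrightarrow> (r + 3 * k) mod 6 = r \<Longrightarrow> even k"
  by presburger

lemma dominating_cost_eq_imp_4_dvd:
  assumes dom: "dom_broadcast2 (torus_V 6 n) (torus_E 6 n) f" and n: "4 \<le> n"
    and cost: "bcost (torus_V 6 n) f = n"
  shows "4 dvd n"
proof -
  have pair: "load n f j + load n f (j + 1) = 2" for j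
    using dominating_cost_eq_alternating[OF assms, of j] unfolding alternating_def by auto
  obtain h where h: "load n f h = 2"
    using pair[of 0] dominating_cost_eq_alternating[OF assms, of 0] unfolding alternating_def by auto
  note parity = alternating_parity[of "load n f", OF pair h]
  have "load n f (h - 1) = 0" using pair[of "h - 1"] h by simp
  moreover have "load n f (h + 1) = 0" using parity[of 0] by simp
  moreover have "load n f (h + 2) = 2" "load n f (h + 3) = 0" using parity[of 1] by (simp_all add: add.assoc)
  ultimately have "gap_column n f (h + 1)" using h unfolding gap_column_def by (simp add: add.assoc)
  then obtain r where r: "r < 6" "f (r, wrap n (h + 1 - 1)) = 2"
    using gap_column_neighbours[OF dom n] by blast
  then have r: "r < 6" "f (r, wrap n h) = 2" by simp_all
  have return: "even k" if "wrap n (h + 2 * int k) = wrap n h" for k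
  proof -
    have orbit: "f ((r + 3 * k) mod 6, wrap n h) = 2"
      using tight_rows_orbit[OF dom n pair h r, of k] that by simp
    have "(r + 3 * k) mod 6 = r"
    proof (rule ccontr)
      assume "(r + 3 * k) mod 6 \<noteq> r"
      then have "f ((r + 3 * k) mod 6, wrap n h) = 0"
        using col_sum_2_single[of f "wrap n h" r "(r + 3 * k) mod 6"] h r unfolding load_def by simp
      then show False using orbit by simp
    qed
    then show ?thesis using rows_shift_return r(1) by blast
  qed
  have "even n" using return[of n] by (simp add: wrap_def)
  then have "h + 2 * int (n div 2) = h + int n" by (metis dvd_mult_div_cancel of_nat_mult of_nat_numeral)
  then have "even (n div 2)" using return[of "n div 2"] by (simp add: wrap_def)
  then show ?thesis using \<open>even n\<close> by presburger
qed

theorem theorem4p7: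
  fixes n :: nat
  assumes "n \<ge> 6"
  shows "gamma_b2 (torus_V 6 n) (torus_E 6 n) = n + (if n mod 4 = 0 then 0 else 1)"
  unfolding gamma_b2_def
proof (rule Least_equality)
  show "\<exists>f. dom_broadcast2 (torus_V 6 n) (torus_E 6 n) f \<and>
      bcost (torus_V 6 n) f = n + (if n mod 4 = 0 then 0 else 1)"
    using zigzag_dominating[OF assms] zigzag_cost[OF assms] by blast
next
  fix c assume "\<exists>f. dom_broadcast2 (torus_V 6 n) (torus_E 6 n) f \<and> bcost (torus_V 6 n) f = c"
  then obtain f where f: "dom_broadcast2 (torus_V 6 n) (torus_E 6 n) f" "bcost (torus_V 6 n) f = c"
    by blast
  have "n \<le> c" using dominating_cost_ge[OF f(1)] f(2) assms by simp
  moreover have "c = n \<Longrightarrow> 4 dvd n" using dominating_cost_eq_imp_4_dvd[OF f(1)] f(2) assms by simp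
  ultimately show "n + (if n mod 4 = 0 then 0 else 1) \<le> c"
    by (cases "c = n") (auto simp: dvd_eq_mod_eq_0)
qed

end
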